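(* In the monoid $\Pi_2=\langle a,b,c\mid (ab^ic)^2=1\ (i\geq 1)\rangle$, for every $i\geq 1$ the factorisation of the word $(ab^ic)^2$ into minimal invertible factors is $(ab^ic)(ab^ic)$; that is, $ab^ic$ is a minimal invertible word in $\Pi_2$.
   Context: A word $w$ over $\{a,b,c\}$ is invertible in a monoid $M$ if the element it represents is a unit (has both a left and a right inverse). A non-empty invertible word is minimal (a minimal invertible factor) if none of its non-empty proper prefixes is invertible in $M$ (equivalently, none of its non-empty proper suffixes is invertible). Every invertible word factors uniquely as a product of minimal invertible words. *)

theory Defs
  imports Main
begin

datatype letter = a | b | c

type_synonym word = "letter list"

definition abic :: "nat \<Rightarrow> word" where
  "abic i = [a] @ replicate i b @ [c]"

inductive pi2_eq :: "word \<Rightarrow> word \<Rightarrow> bool" where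
  rel: "i \<ge> 1 \<Longrightarrow> pi2_eq (abic i @ abic i) []"
| refl: "pi2_eq u u"
| sym: "pi2_eq u v \<Longrightarrow> pi2_eq v u"
| trans: "pi2_eq u v \<Longrightarrow> pi2_eq v w \<Longrightarrow> pi2_eq u w"
| ctxt: "pi2_eq u v \<Longrightarrow> pi2_eq (x @ u @ y) (x @ v @ y)"

definition invertible :: "word \<Rightarrow> bool" where
  "invertible w \<longleftrightarrow> (\<exists>u. pi2_eq (u @ w) []) \<and> (\<exists>v. pi2_eq (w @ v) [])"

definition minimal_invertible :: "word \<Rightarrow> bool" where
  "minimal_invertible w \<longleftrightarrow> w \<noteq> [] \<and> invertible w \<and>
     (\<forall>p s. w = p @ s \<and> p \<noteq> [] \<and> s \<noteq> [] \<longrightarrow> \<not> invertible p)"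

end

theory Submission
  imports Defs
begin

text \<open>Let a, b, c act on \<open>\<nat>\<close> as successor, identity and truncated predecessor. Every relator
  (a b^i c)^2 acts as the identity, so the action is an invariant of the congruence, and an invertible
  word, having a left inverse, must act with 0 in its image. A proper nonempty prefix a b^k of a b^i c
  acts as the successor, hence is not invertible; so a b^i c is minimal invertible. Finally, two minimal
  invertible words one of which is a prefix of the other coincide, which makes factorisations into
  minimal invertible words unique.\<close>

fun letter_action :: "letter \<Rightarrow> nat \<Rightarrow> nat" where
  "letter_action a = Suc"
| "letter_action b = id"
| "letter_action c = (\<lambda>n. n - 1)"

fun word_action :: "word \<Rightarrow> nat \<Rightarrow> nat" where
  "word_action [] = id"
| "word_action (x # w) = word_action w \<circ> letter_action x"

lemma word_action_append: "word_action (u @ v) = word_action v \<circ> word_action u"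
  by (induction u) auto

lemma word_action_replicate_b: "word_action (replicate k b) = id"
  by (induction k) auto

lemma word_action_abic: "word_action (abic i) = id"
  by (simp add: abic_def word_action_append word_action_replicate_b fun_eq_iff)

lemma pi2_eq_word_action: "pi2_eq u v \<Longrightarrow> word_action u = word_action v"
  by (induction rule: pi2_eq.induct) (auto simp: word_action_append word_action_abic)

lemma invertible_zero_in_range:
  assumes "invertible w"
  shows "0 \<in> range (word_action w)"
proof -
  obtain u where "pi2_eq (u @ w) []"
    using assms unfolding invertible_def by blast
  then have "word_action w \<circ> word_action u = id"
    using pi2_eq_word_action word_action_append by fastforce
  then have "word_action w (word_action u 0) = 0"
    by (metis comp_apply id_apply)
  then show ?thesis by (metis rangeI)
qed

lemma not_invertible_a_replicate_b: "\<not> invertible (a # replicate k b)"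
proof -
  have "word_action (a # replicate k b) = Suc"
    by (simp add: word_action_replicate_b)
  then show ?thesis
    using invertible_zero_in_range by (metis Zero_not_Suc rangeE)
qed

lemma invertible_abic: "i \<ge> 1 \<Longrightarrow> invertible (abic i)"
  unfolding invertible_def using pi2_eq.rel by blast

lemma proper_prefix_abic:
  assumes "abic i = p @ s" "p \<noteq> []" "s \<noteq> []"
  shows "p = a # replicate (length p - 1) b"
proof -
  have "length p + length s = i + 2"
    using arg_cong[OF assms(1), of length] by (simp add: abic_def)
  then have "length p \<le> Suc i"
    using assms(3) by (cases s) auto
  moreover have "p = take (length p) (abic i)"
    using assms(1) by simp
  ultimately show ?thesis
    using assms(2) by (cases "length p") (auto simp: abic_def)
qed

lemma minimal_invertible_abic:
  assumes "i \<ge> 1"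
  shows "minimal_invertible (abic i)"
  unfolding minimal_invertible_def
proof (intro conjI allI impI)
  show "abic i \<noteq> []"
    by (simp add: abic_def)
  show "invertible (abic i)"
    using invertible_abic assms .
  fix p s
  assume "abic i = p @ s \<and> p \<noteq> [] \<and> s \<noteq> []"
  then have "p = a # replicate (length p - 1) b"
    using proper_prefix_abic by blast
  then show "\<not> invertible p"
    by (metis not_invertible_a_replicate_b)
qed

lemma minimal_invertible_prefix_eq:
  assumes "minimal_invertible f" "minimal_invertible g" "f @ r = g @ t"
  shows "f = g \<and> r = t"
proof -
  obtain us where split: "f = g @ us \<and> us @ r = t \<or> f @ us = g \<and> r = us @ t"
    using assms(3) by (auto simp: append_eq_append_conv2)
  then have "us = []"
    using assms(1,2) unfolding minimal_invertible_def by blast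
  with split show ?thesis
    by auto
qed

lemma minimal_invertible_factorisation_unique:
  assumes "concat fs = concat gs"
    and "\<forall>f\<in>set fs. minimal_invertible f" "\<forall>g\<in>set gs. minimal_invertible g"
  shows "fs = gs"
  using assms
proof (induction fs arbitrary: gs)
  case Nil
  then show ?case
    by (cases gs) (auto simp: minimal_invertible_def)
next
  case (Cons f fs)
  have "f \<noteq> []"
    using Cons.prems(2) by (simp add: minimal_invertible_def)
  then obtain g gs' where gs: "gs = g # gs'"
    using Cons.prems(1) by (cases gs) auto
  have "f = g \<and> concat fs = concat gs'"
    using minimal_invertible_prefix_eq[of f g "concat fs" "concat gs'"] Cons.prems gs by simp
  moreover have "fs = gs'"
    using Cons.IH[of gs'] Cons.prems gs calculation by simp
  ultimately show ?case
    using gs by simp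
qed

theorem mainTheorem4:
  fixes i :: nat
  assumes "i \<ge> 1"
  shows "minimal_invertible (abic i) \<and>
         (\<forall>fs. concat fs = abic i @ abic i \<and> (\<forall>f\<in>set fs. minimal_invertible f)
                \<longrightarrow> fs = [abic i, abic i])"
proof (intro conjI allI impI)
  show abic_minimal: "minimal_invertible (abic i)"
    using minimal_invertible_abic assms .
  fix fs
  assume fs: "concat fs = abic i @ abic i \<and> (\<forall>f\<in>set fs. minimal_invertible f)"
  show "fs = [abic i, abic i]"
  proof (rule minimal_invertible_factorisation_unique)
    show "concat fs = concat [abic i, abic i]"
      using fs by simp
    show "\<forall>f\<in>set fs. minimal_invertible f"
      using fs by blast
    show "\<forall>g\<in>set [abic i, abic i]. minimal_invertible g"
      using abic_minimal by simp
  qed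
qed

end
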